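(* If $n\ge 3t+1$, then the protocol COOL (core protocol run by all $n$ processors, as described in the context) satisfies termination, consistency and validity in every execution, i.e. it is an error-free Byzantine agreement protocol.
   Context: Setting. $n$ processors indexed by $[1:n]$, pairwise joined by reliable private synchronous channels; recipients know senders. At most $t$ processors are dishonest, controlled by a Byzantine adversary of unbounded computational power knowing all inputs, who may make them deviate arbitrarily (missing values are replaced by a fixed default); the others are honest. Processor $i$ holds an $\ell$-bit initial message $\boldsymbol w_i$. $\phi$ is a default value different from every $\ell$-bit message. Logarithms are base 2. Requirements: termination (every honest processor eventually outputs and terminates), consistency (all honest outputs equal), validity (if all honest processors have the same initial message, they output it). Code. $k=\lfloor t/5\rfloor+1$, $c=\lceil \max\{\ell,(t/5+1)\log(n+1)\}/k\rceil$. Messages are zero-padded to $kc$ bits and viewed in $GF(2^c)^k$. Integers in $[1:n]$ are identified with distinct nonzero elements of $GF(2^c)$; $\boldsymbol h_i\in GF(2^c)^k$ has entries $h_{i,j}=\prod_{p\in[1:k],\,p\ne j}\frac{i-p}{j-p}$ (field arithmetic). COOL (honest processor $i$). Initialization: updated message $\boldsymbol w^{(i)}:=\boldsymbol w_i$, $y^{(i)}_j:=\boldsymbol h_j^{\mathsf T}\boldsymbol w_i$ for $j\in[1:n]$, $u_i(i):=1$. Phase 1. (a) Send $(y^{(i)}_j,y^{(i)}_i)$ to each $j\ne i$. (b) For $j\ne i$, link indicator $u_i(j):=1$ if the pair received from $j$ equals $(y^{(i)}_i,y^{(i)}_j)$, else $0$. Success indicator $s_i:=1$ if $\sum_{j=1}^n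 u_i(j)\ge n-t$; otherwise $s_i:=0$ and $\boldsymbol w^{(i)}:=\phi$. (c) Send $s_i$ to all; each processor records the indicator received from each $j$ (own for itself) and forms $\mathcal S_1=\{j:s_j=1\}$, $\mathcal S_0=\{j:s_j=0\}$ (views may differ). Phase 2. If $s_i=1$: set $u_i(j):=0$ for all $j\in\mathcal S_0$; if now $\sum_j u_i(j)<n-t$, set $s_i:=0$, $\boldsymbol w^{(i)}:=\phi$, and send $s_i=0$ to all. Everyone overwrites recorded indicators with newly received ones and recomputes $\mathcal S_0,\mathcal S_1$. Phase 3. Repeat Phase 2 once more. Vote $v_i:=1$ if the recorded indicators satisfy $\sum_j s_j\ge 2t+1$, else $0$. Run on the votes a deterministic error-free binary Byzantine agreement protocol for $t<n/3$ (e.g. Berman–Garay–Perry or Coan–Welch), which guarantees all honest processors decide, decide equally, and decide the common honest vote when all honest votes agree. If the decision is $0$: set $\boldsymbol w^{(i)}:=\phi$, output $\phi$, stop. Phase 4 (decision 1). If $s_i=0$: replace $y^{(i)}_i$ by the most frequent value (fixed tie-breaking) among the first components of the Phase-1 pairs received from $j\in\mathcal S_1$; send it to each $j\in\mathcal S_0\setminus\{i\}$; with $z_i=y^{(i)}_i$, $z_j$ = value received from $j$ in Phase 4 for $j\in\mathcal S_0\setminus\{i\}$, $z_j$ = second component of the Phase-1 pair from $j$ for $j\in\mathcal S_1$, set $\boldsymbol w^{(i)}$ to a message $\boldsymbol x$ with $\boldsymbol h_j^{\mathsf T}\boldsymbol x=z_j$ for at least $n-t$ indices $j$ ($\phi$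 if none). If $s_i=1$ keep $\boldsymbol w^{(i)}$. Output $\boldsymbol w^{(i)}$ and stop. *)

theory Defs
  imports Complex_Main "HOL-Library.Cardinality"
begin

text \<open>Protocol parameters: number of processors n, fault bound t, message length l,
  the identification alpha of the integers 1..n with distinct nonzero field elements,
  the identification beta of c-bit blocks with field elements, and the fixed
  tie-breaking rule tieb used in Phase 4 (it picks one element of the set of most
  frequent values).\<close>

record 'f cool_params =
  nP    :: nat
  tP    :: nat
  lP    :: nat
  alpha :: "nat \<Rightarrow> 'f"
  beta  :: "bool list \<Rightarrow> 'f"
  tieb  :: "'f set \<Rightarrow> 'f"

text \<open>Everything that is not determined by the honest processors: the set of dishonest
  processors and the values they send (adv1 j i = what j sends to i in Phase 1(a),
  adv1c j i in Phase 1(c), adv2/adv3 j i in Phases 2/3 (None = nothing sent),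
  adv4 j i in Phase 4), and the decisions of the binary Byzantine agreement
  sub-protocol (ba_dec i = decision of processor i).\<close>

record 'f cool_adv =
  bad    :: "nat set"
  adv1   :: "nat \<Rightarrow> nat \<Rightarrow> 'f \<times> 'f"
  adv1c  :: "nat \<Rightarrow> nat \<Rightarrow> bool"
  adv2   :: "nat \<Rightarrow> nat \<Rightarrow> bool option"
  adv3   :: "nat \<Rightarrow> nat \<Rightarrow> bool option"
  adv4   :: "nat \<Rightarrow> nat \<Rightarrow> 'f"
  ba_dec :: "nat \<Rightarrow> bool"

definition procs :: "'f cool_params \<Rightarrow> nat set" where
  "procs P = {1..nP P}"

definition honest :: "'f cool_params \<Rightarrow> 'f cool_adv \<Rightarrow> nat set" where
  "honest P A = procs P - bad A"

definition kk :: "'f cool_params \<Rightarrow> nat" where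
  "kk P = tP P div 5 + 1"

definition cc :: "'f cool_params \<Rightarrow> nat" where
  "cc P = nat \<lceil> max (real (lP P)) ((real (tP P) / 5 + 1) * log 2 (real (nP P) + 1))
                 / real (kk P) \<rceil>"

definition enc :: "'f cool_params \<Rightarrow> bool list \<Rightarrow> nat \<Rightarrow> 'f" where
  "enc P x p = beta P (take (cc P) (drop ((p - 1) * cc P)
                   (x @ replicate (kk P * cc P - length x) False)))"

definition hcoef :: "'f::field cool_params \<Rightarrow> nat \<Rightarrow> nat \<Rightarrow> 'f" where
  "hcoef P i j = (\<Prod>p\<in>{1..kk P} - {j}. (alpha P i - alpha P p) / (alpha P j - alpha P p))"

definition sym :: "'f::field cool_params \<Rightarrow> bool list \<Rightarrow> nat \<Rightarrow> 'f" where
  "sym P x i = (\<Sum>j\<in>{1..kk P}. hcoef P i j * enc P x j)"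

definition cnt :: "'f cool_params \<Rightarrow> (nat \<Rightarrow> bool) \<Rightarrow> nat" where
  "cnt P f = card {j \<in> procs P. f j}"

definition y :: "'f::field cool_params \<Rightarrow> (nat \<Rightarrow> bool list) \<Rightarrow> nat \<Rightarrow> nat \<Rightarrow> 'f" where
  "y P w i j = sym P (w i) j"

definition recv1 :: "'f::field cool_params \<Rightarrow> (nat \<Rightarrow> bool list) \<Rightarrow> 'f cool_adv
                       \<Rightarrow> nat \<Rightarrow> nat \<Rightarrow> 'f \<times> 'f" where
  "recv1 P w A i j = (if j \<in> bad A then adv1 A j i else (y P w j i, y P w j j))"

definition u1 :: "'f::field cool_params \<Rightarrow> (nat \<Rightarrow> bool list) \<Rightarrow> 'f cool_adv
                    \<Rightarrow> nat \<Rightarrow> nat \<Rightarrow> bool" where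
  "u1 P w A i j = (if j = i then True else recv1 P w A i j = (y P w i i, y P w i j))"

definition s1 :: "'f::field cool_params \<Rightarrow> (nat \<Rightarrow> bool list) \<Rightarrow> 'f cool_adv \<Rightarrow> nat \<Rightarrow> bool" where
  "s1 P w A i = (cnt P (u1 P w A i) \<ge> nP P - tP P)"

definition rs1 :: "'f::field cool_params \<Rightarrow> (nat \<Rightarrow> bool list) \<Rightarrow> 'f cool_adv
                     \<Rightarrow> nat \<Rightarrow> nat \<Rightarrow> bool" where
  "rs1 P w A i j = (if j = i then s1 P w A i
                    else if j \<in> bad A then adv1c A j i else s1 P w A j)"

definition u2 :: "'f::field cool_params \<Rightarrow> (nat \<Rightarrow> bool list) \<Rightarrow> 'f cool_adv
                    \<Rightarrow> nat \<Rightarrow> nat \<Rightarrow> bool" where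
  "u2 P w A i j = (if s1 P w A i then u1 P w A i j \<and> rs1 P w A i j else u1 P w A i j)"

definition s2 :: "'f::field cool_params \<Rightarrow> (nat \<Rightarrow> bool list) \<Rightarrow> 'f cool_adv \<Rightarrow> nat \<Rightarrow> bool" where
  "s2 P w A i = (s1 P w A i \<and> cnt P (u2 P w A i) \<ge> nP P - tP P)"

definition msg2 :: "'f::field cool_params \<Rightarrow> (nat \<Rightarrow> bool list) \<Rightarrow> 'f cool_adv
                      \<Rightarrow> nat \<Rightarrow> nat \<Rightarrow> bool option" where
  "msg2 P w A i j = (if j \<in> bad A then adv2 A j i
                     else if s1 P w A j \<and> \<not> s2 P w A j then Some False else None)"

definition rs2 :: "'f::field cool_params \<Rightarrow> (nat \<Rightarrow> bool list) \<Rightarrow> 'f cool_adv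
                     \<Rightarrow> nat \<Rightarrow> nat \<Rightarrow> bool" where
  "rs2 P w A i j = (if j = i then s2 P w A i
                    else case msg2 P w A i j of None \<Rightarrow> rs1 P w A i j | Some b \<Rightarrow> b)"

definition u3 :: "'f::field cool_params \<Rightarrow> (nat \<Rightarrow> bool list) \<Rightarrow> 'f cool_adv
                    \<Rightarrow> nat \<Rightarrow> nat \<Rightarrow> bool" where
  "u3 P w A i j = (if s2 P w A i then u2 P w A i j \<and> rs2 P w A i j else u2 P w A i j)"

definition s3 :: "'f::field cool_params \<Rightarrow> (nat \<Rightarrow> bool list) \<Rightarrow> 'f cool_adv \<Rightarrow> nat \<Rightarrow> bool" where
  "s3 P w A i = (s2 P w A i \<and> cnt P (u3 P w A i) \<ge> nP P - tP P)"

definition msg3 :: "'f::field cool_params \<Rightarrow> (nat \<Rightarrow> bool list) \<Rightarrow> 'f cool_adv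
                      \<Rightarrow> nat \<Rightarrow> nat \<Rightarrow> bool option" where
  "msg3 P w A i j = (if j \<in> bad A then adv3 A j i
                     else if s2 P w A j \<and> \<not> s3 P w A j then Some False else None)"

definition rs3 :: "'f::field cool_params \<Rightarrow> (nat \<Rightarrow> bool list) \<Rightarrow> 'f cool_adv
                     \<Rightarrow> nat \<Rightarrow> nat \<Rightarrow> bool" where
  "rs3 P w A i j = (if j = i then s3 P w A i
                    else case msg3 P w A i j of None \<Rightarrow> rs2 P w A i j | Some b \<Rightarrow> b)"

definition vote :: "'f::field cool_params \<Rightarrow> (nat \<Rightarrow> bool list) \<Rightarrow> 'f cool_adv \<Rightarrow> nat \<Rightarrow> bool" where
  "vote P w A i = (cnt P (rs3 P w A i) \<ge> 2 * tP P + 1)"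

text \<open>Guarantees of the binary Byzantine agreement sub-protocol (run on the votes):
  honest processors decide equally, and decide the common honest vote if all honest
  votes agree.\<close>
definition ba_ok :: "'f::field cool_params \<Rightarrow> (nat \<Rightarrow> bool list) \<Rightarrow> 'f cool_adv \<Rightarrow> bool" where
  "ba_ok P w A \<longleftrightarrow>
     (\<forall>i\<in>honest P A. \<forall>j\<in>honest P A. ba_dec A i = ba_dec A j) \<and>
     (\<forall>b. (\<forall>i\<in>honest P A. vote P w A i = b) \<longrightarrow> (\<forall>i\<in>honest P A. ba_dec A i = b))"

definition S1v :: "'f::field cool_params \<Rightarrow> (nat \<Rightarrow> bool list) \<Rightarrow> 'f cool_adv \<Rightarrow> nat \<Rightarrow> nat set" where
  "S1v P w A i = {j \<in> procs P. rs3 P w A i j}"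

definition freq :: "'f::field cool_params \<Rightarrow> (nat \<Rightarrow> bool list) \<Rightarrow> 'f cool_adv \<Rightarrow> nat \<Rightarrow> 'f \<Rightarrow> nat" where
  "freq P w A i v = card {j \<in> S1v P w A i. fst (recv1 P w A i j) = v}"

definition newy :: "'f::field cool_params \<Rightarrow> (nat \<Rightarrow> bool list) \<Rightarrow> 'f cool_adv \<Rightarrow> nat \<Rightarrow> 'f" where
  "newy P w A i = tieb P {v \<in> (\<lambda>j. fst (recv1 P w A i j)) ` S1v P w A i.
                            \<forall>u. freq P w A i u \<le> freq P w A i v}"

text \<open>Value received by i from j in Phase 4 (an honest j with s_j = 0 sends to every
  member of its S_0 other than itself; a missing value is replaced by the default 0).\<close>
definition recv4 :: "'f::field cool_params \<Rightarrow> (nat \<Rightarrow> bool list) \<Rightarrow> 'f cool_adv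
                       \<Rightarrow> nat \<Rightarrow> nat \<Rightarrow> 'f" where
  "recv4 P w A i j = (if j \<in> bad A then adv4 A j i
                      else if \<not> s3 P w A j \<and> \<not> rs3 P w A j i \<and> i \<noteq> j then newy P w A j else 0)"

definition z :: "'f::field cool_params \<Rightarrow> (nat \<Rightarrow> bool list) \<Rightarrow> 'f cool_adv \<Rightarrow> nat \<Rightarrow> nat \<Rightarrow> 'f" where
  "z P w A i j = (if j = i then newy P w A i
                  else if \<not> rs3 P w A i j then recv4 P w A i j
                  else snd (recv1 P w A i j))"

definition decodable :: "'f::field cool_params \<Rightarrow> (nat \<Rightarrow> bool list) \<Rightarrow> 'f cool_adv
                           \<Rightarrow> nat \<Rightarrow> bool list \<Rightarrow> bool" where
  "decodable P w A i x \<longleftrightarrow> length x = lP P \<and> cnt P (\<lambda>j. sym P x j = z P w A i j) \<ge> nP P - tP P"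

text \<open>Output of honest processor i: None stands for the default value phi.\<close>
definition cool_output :: "'f::field cool_params \<Rightarrow> (nat \<Rightarrow> bool list) \<Rightarrow> 'f cool_adv
                        \<Rightarrow> nat \<Rightarrow> bool list option" where
  "cool_output P w A i =
     (if \<not> ba_dec A i then None
      else if s3 P w A i then Some (w i)
      else if \<exists>x. decodable P w A i x then Some (SOME x. decodable P w A i x)
      else None)"

end

theory Submission
  imports Defs "HOL-Computational_Algebra.Polynomial"
begin

(* The symbols sym P x 1, ..., sym P x n are the values at alpha 1, ..., alpha n of the
   polynomial of degree < k that takes the k blocks of x at alpha 1, ..., alpha k, so two
   distinct messages agree at no more than k - 1 = t div 5 processors.

   Counting consistent links with this bound shows first that at most two distinct messages
   of honest processors survive Phase 1, and then that two honest processors with distinct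
   messages a and b cannot both survive Phase 2: each has many surviving honest neighbours
   holding its own message at positions where a and b differ, apart from holders of that
   message these neighbours can only link to honest holders of third messages, and such a
   holder links to fewer than k of them; double counting contradicts n >= 3t + 1.

   So all honest survivors of Phase 3 hold one message w0. A decision 1 of the binary
   agreement means some honest vote was 1, so the honest survivors outnumber the dishonest
   processors. Then every honest failed processor recovers its own symbol of w0 by majority,
   all honest z-values are symbols of w0, and decoding is unique because two sets of n - t
   agreeing positions share at least n - 2t >= k of them. *)

lemma sum_card_filter_swap:
  assumes "finite X" "finite Y"
  shows "(\<Sum>x\<in>X. card {y\<in>Y. R x y}) = (\<Sum>y\<in>Y. card {x\<in>X. R x y})"
proof -
  have "card {y\<in>Y. R x y} = (\<Sum>y\<in>Y. if R x y then 1 else 0)" for x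
    using assms(2) by (simp add: sum.inter_filter[symmetric])
  moreover have "card {x\<in>X. R x y} = (\<Sum>x\<in>X. if R x y then 1 else 0)" for y
    using assms(1) by (simp add: sum.inter_filter[symmetric])
  ultimately show ?thesis using sum.swap by simp
qed

lemma card3_le_card_Un_Int:
  assumes "finite X" "finite Y" "finite Z"
  shows "card X + card Y + card Z
           \<le> card (X \<union> Y \<union> Z) + card (X \<inter> Y) + card (X \<inter> Z) + card (Y \<inter> Z)"
proof -
  have "card (X \<union> (Y \<union> Z)) + card (X \<inter> (Y \<union> Z)) = card X + card (Y \<union> Z)"
    using assms card_Un_Int[of X "Y \<union> Z"] by auto
  moreover have "card (Y \<union> Z) + card (Y \<inter> Z) = card Y + card Z"
    using assms card_Un_Int[of Y Z] by auto
  moreover have "card (X \<inter> (Y \<union> Z)) \<le> card (X \<inter> Y) + card (X \<inter> Z)"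
    by (metis Int_Un_distrib card_Un_le)
  ultimately show ?thesis by (simp add: Un_assoc)
qed

lemma card_filter_two_values:
  assumes "finite H" "a \<noteq> b"
  shows "card {x\<in>H. f x = a} + card {x\<in>H. f x = b} + card {x\<in>H. f x \<notin> {a, b}} = card H"
proof -
  have "card ({x\<in>H. f x = a} \<union> {x\<in>H. f x = b}) = card {x\<in>H. f x = a} + card {x\<in>H. f x = b}"
    using assms by (intro card_Un_disjoint) auto
  moreover have "card (({x\<in>H. f x = a} \<union> {x\<in>H. f x = b}) \<union> {x\<in>H. f x \<notin> {a, b}})
      = card ({x\<in>H. f x = a} \<union> {x\<in>H. f x = b}) + card {x\<in>H. f x \<notin> {a, b}}"
    using assms by (intro card_Un_disjoint) auto
  moreover have "({x\<in>H. f x = a} \<union> {x\<in>H. f x = b}) \<union> {x\<in>H. f x \<notin> {a, b}} = H" by auto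
  ultimately show ?thesis by simp
qed

lemma list_eq_if_blocks_eq:
  assumes xs: "length xs = k * c" and ys: "length ys = k * c"
    and blocks: "\<And>p. p < k \<Longrightarrow> take c (drop (p * c) xs) = take c (drop (p * c) ys)"
  shows "xs = ys"
proof (rule nth_equalityI)
  show "length xs = length ys" using xs ys by simp
next
  fix i assume "i < length xs"
  then have i: "i < k * c" using xs by simp
  then have "0 < c" by (cases c) auto
  define p r where "p = i div c" and "r = i mod c"
  have r: "r < c" and i_eq: "i = p * c + r" using \<open>0 < c\<close> by (simp_all add: p_def r_def)
  have "p < k" using i \<open>0 < c\<close> by (simp add: p_def less_mult_imp_div_less)
  have "p * c \<le> k * c" using \<open>p < k\<close> by simp
  have "xs ! i = take c (drop (p * c) xs) ! r" using r i_eq i xs \<open>p * c \<le> k * c\<close> by simp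
  also have "\<dots> = take c (drop (p * c) ys) ! r" using blocks[OF \<open>p < k\<close>] by simp
  also have "\<dots> = ys ! i" using r i_eq i ys \<open>p * c \<le> k * c\<close> by simp
  finally show "xs ! i = ys ! i" .
qed

lemma double_count_bounds_contradiction:
  fixes pa pb ga gb r nb m n t :: nat
  assumes pa: "n - t \<le> pa + m + nb" and pb: "n - t \<le> pb + m + nb"
    and da: "pa * (n - t - nb - ga) \<le> r * m" and db: "pb * (n - t - nb - gb) \<le> r * m"
    and part: "ga + gb + r + nb = n" and n: "3 * t + 1 \<le> n" and nb: "nb \<le> t" and m: "5 * m \<le> t"
  shows False
proof -
  define xa xb where "xa = n - t - nb - ga" and "xb = n - t - nb - gb"
  have N: "n - t + t = n" using n by simp
  have "n - t \<le> xa + nb + ga" "n - t \<le> xb + nb + gb" by (simp_all add: xa_def xb_def)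
  then have x: "r + 1 \<le> xa + xb" using part N n nb by linarith
  have "2 * m + 1 \<le> pa" "2 * m + 1 \<le> pb" using pa pb N n nb m by linarith+
  then have "(2 * m + 1) * xa \<le> pa * xa" "(2 * m + 1) * xb \<le> pb * xb"
    by (simp_all only: mult_le_mono1)
  moreover have "(2 * m + 1) * (r + 1) \<le> (2 * m + 1) * (xa + xb)"
    using x by (rule mult_left_mono) simp
  ultimately have "(2 * m + 1) * (r + 1) \<le> 2 * (r * m)"
    using da db unfolding xa_def[symmetric] xb_def[symmetric] by (simp add: algebra_simps)
  then show False by (simp add: algebra_simps)
qed

lemma argmax_set_eq_singleton:
  fixes f :: "'a \<Rightarrow> 'b::linorder"
  assumes "v \<in> V" "\<And>u. u \<noteq> v \<Longrightarrow> f u < f v"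
  shows "{x\<in>V. \<forall>u. f u \<le> f x} = {v}"
proof (intro equalityI subsetI)
  fix x assume "x \<in> {x\<in>V. \<forall>u. f u \<le> f x}"
  then show "x \<in> {v}" using assms(2)[of x] by (auto simp: not_less[symmetric])
next
  have "f u \<le> f v" for u using assms(2)[of u] by (cases "u = v") auto
  then show "x \<in> {x\<in>V. \<forall>u. f u \<le> f x}" if "x \<in> {v}" for x using that assms(1) by simp
qed

definition lagrange_basis :: "'f::field cool_params \<Rightarrow> nat \<Rightarrow> 'f poly" where
  "lagrange_basis P p = smult (inverse (\<Prod>q\<in>{1..kk P} - {p}. alpha P p - alpha P q))
                          (\<Prod>q\<in>{1..kk P} - {p}. [:- alpha P q, 1:])"

definition code_poly :: "'f::field cool_params \<Rightarrow> bool list \<Rightarrow> 'f poly" where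
  "code_poly P x = (\<Sum>p\<in>{1..kk P}. smult (enc P x p) (lagrange_basis P p))"

lemma poly_lagrange_basis: "poly (lagrange_basis P p) (alpha P j) = hcoef P j p"
  unfolding lagrange_basis_def hcoef_def prod_dividef
  by (simp add: poly_prod divide_inverse mult.commute)

lemma sym_eq_poly_code_poly: "sym P x j = poly (code_poly P x) (alpha P j)"
  unfolding code_poly_def sym_def by (simp add: poly_sum poly_lagrange_basis mult.commute)

lemma degree_lagrange_basis:
  assumes "p \<in> {1..kk P}"
  shows "degree (lagrange_basis P p) < kk P"
proof -
  have "degree (\<Prod>q\<in>{1..kk P} - {p}. [:- alpha P q, 1:]) \<le> (\<Sum>q\<in>{1..kk P} - {p}. 1)"
    using degree_prod_sum_le[of "{1..kk P} - {p}" "\<lambda>q. [:- alpha P q, 1:]"] by (simp add: o_def)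
  also have "\<dots> < kk P" using assms by simp
  finally show ?thesis
    unfolding lagrange_basis_def using degree_smult_le le_less_trans by blast
qed

lemma degree_code_poly: "degree (code_poly P x) < kk P"
proof -
  have "degree (code_poly P x) \<le> kk P - 1"
    unfolding code_poly_def
  proof (rule degree_sum_le)
    fix p assume "p \<in> {1..kk P}"
    then show "degree (smult (enc P x p) (lagrange_basis P p)) \<le> kk P - 1"
      using degree_lagrange_basis[of p P] degree_smult_le[of "enc P x p" "lagrange_basis P p"]
      by linarith
  qed simp
  moreover have "0 < kk P" by (simp add: kk_def)
  ultimately show ?thesis by linarith
qed

lemma hcoef_first_block:
  assumes inj: "inj_on (alpha P) {1..kk P}" and p: "p \<in> {1..kk P}" and p': "p' \<in> {1..kk P}"
  shows "hcoef P p p' = (if p = p' then 1 else 0)"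
proof (cases "p = p'")
  case True
  have "alpha P p' \<noteq> alpha P q" if "q \<in> {1..kk P} - {p'}" for q
    using inj that p' by (auto dest: inj_onD)
  then show ?thesis using True by (simp add: hcoef_def)
next
  case False
  then have "p \<in> {1..kk P} - {p'}" using p by simp
  then have "hcoef P p p' = 0" unfolding hcoef_def by (intro prod_zero) auto
  then show ?thesis using False by simp
qed

lemma sym_first_block_eq_enc:
  fixes P :: "'f::field cool_params"
  assumes "inj_on (alpha P) {1..kk P}" and p: "p \<in> {1..kk P}"
  shows "sym P x p = enc P x p"
proof -
  have "sym P x p = (\<Sum>j\<in>{1..kk P}. if p = j then enc P x j else 0)"
    unfolding sym_def by (intro sum.cong refl) (simp add: hcoef_first_block[OF assms])
  also have "\<dots> = enc P x p" using p by simp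
  finally show ?thesis .
qed

lemma lP_le_kk_cc: "lP P \<le> kk P * cc P"
proof -
  define M where "M = max (real (lP P)) ((real (tP P) / 5 + 1) * log 2 (real (nP P) + 1))"
  have k: "real (kk P) > 0" by (simp add: kk_def)
  have "real (lP P) / real (kk P) \<le> M / real (kk P)"
    using k by (intro divide_right_mono) (auto simp: M_def)
  also have "\<dots> \<le> real (cc P)"
    unfolding cc_def M_def[symmetric] by linarith
  finally show ?thesis using k by (simp add: field_simps flip: of_nat_mult)
qed

lemma enc_injective:
  assumes beta_inj: "inj_on (beta P) {xs. length xs = cc P}"
    and lc: "length c = lP P" and ld: "length d = lP P"
    and eq: "\<And>p. p \<in> {1..kk P} \<Longrightarrow> enc P c p = enc P d p"
  shows "c = d"
proof -
  define pad where "pad x = x @ replicate (kk P * cc P - lP P) False" for x :: "bool list"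
  have len_pad: "length (pad c) = kk P * cc P" "length (pad d) = kk P * cc P"
    using lP_le_kk_cc[of P] lc ld by (simp_all add: pad_def)
  have "pad c = pad d"
  proof (rule list_eq_if_blocks_eq[OF len_pad])
    fix p assume "p < kk P"
    then have "p * cc P + cc P \<le> kk P * cc P"
      by (metis add.commute mult_Suc Suc_leI mult_le_mono1)
    then have "length (take (cc P) (drop (p * cc P) (pad x))) = cc P"
      if "length (pad x) = kk P * cc P" for x
      using that by simp
    moreover have "beta P (take (cc P) (drop (p * cc P) (pad c)))
                   = beta P (take (cc P) (drop (p * cc P) (pad d)))"
      using eq[of "Suc p"] \<open>p < kk P\<close> lc ld by (simp add: enc_def pad_def)
    ultimately show "take (cc P) (drop (p * cc P) (pad c)) = take (cc P) (drop (p * cc P) (pad d))"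
      using beta_inj len_pad by (auto dest: inj_onD)
  qed
  then have "take (lP P) (pad c) = take (lP P) (pad d)" by simp
  then show ?thesis using lc ld by (simp add: pad_def)
qed

lemma sym_agree_imp_eq:
  fixes P :: "'f::field cool_params"
  assumes alpha_inj: "inj_on (alpha P) {1..nP P}" and kn: "kk P \<le> nP P"
    and beta_inj: "inj_on (beta P) {xs. length xs = cc P}"
    and lc: "length c = lP P" and ld: "length d = lP P"
    and S: "S \<subseteq> {1..nP P}" and card_S: "kk P \<le> card S"
    and agree: "\<And>j. j \<in> S \<Longrightarrow> sym P c j = sym P d j"
  shows "c = d"
proof -
  have "card (alpha P ` S) = card S"
    using inj_on_subset[OF alpha_inj S] by (rule card_image)
  then have "degree (code_poly P x) < card (alpha P ` S)" for x
    using degree_code_poly[of P x] card_S by linarith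
  then have "code_poly P c = code_poly P d"
    using agree by (intro poly_eqI_degree[of "alpha P ` S"]) (auto simp: sym_eq_poly_code_poly)
  moreover have "inj_on (alpha P) {1..kk P}"
    using alpha_inj kn by (auto intro: inj_on_subset)
  ultimately have "enc P c p = enc P d p" if "p \<in> {1..kk P}" for p
    using that by (metis sym_first_block_eq_enc sym_eq_poly_code_poly)
  then show ?thesis using enc_injective[OF beta_inj lc ld] by blast
qed

locale cool_run =
  fixes P :: "'f::field cool_params" and A :: "'f cool_adv" and w :: "nat \<Rightarrow> bool list"
  assumes n_bound: "3 * tP P + 1 \<le> nP P"
    and alpha_inj: "inj_on (alpha P) {1..nP P}"
    and beta_inj: "inj_on (beta P) {xs. length xs = cc P}"
    and tieb_ok: "\<And>S. S \<noteq> {} \<Longrightarrow> tieb P S \<in> S"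
    and bad_sub: "bad A \<subseteq> {1..nP P}"
    and bad_card: "card (bad A) \<le> tP P"
    and inputs: "\<And>i. i \<in> honest P A \<Longrightarrow> length (w i) = lP P"
begin

abbreviation "H \<equiv> honest P A"
abbreviation "n \<equiv> nP P"
abbreviation "t \<equiv> tP P"
abbreviation "nbad \<equiv> card (bad A)"
abbreviation "m \<equiv> tP P div 5"

lemma honest_iff: "j \<in> H \<longleftrightarrow> j \<in> {1..n} \<and> j \<notin> bad A"
  unfolding honest_def procs_def by auto

lemma finite_honest: "finite H"
  unfolding honest_def procs_def by simp

lemma card_honest: "card H + nbad = n"
proof -
  have "card H = card {1..n} - nbad"
    unfolding honest_def procs_def using bad_sub by (simp add: card_Diff_subset finite_subset)
  moreover have "nbad \<le> card {1..n}" using bad_sub by (intro card_mono) auto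
  ultimately show ?thesis by simp
qed

lemma finite_bad: "finite (bad A)"
  using bad_sub by (rule finite_subset) simp

lemma cnt_le_honest_plus_bad: "cnt P f \<le> card {j\<in>H. f j} + nbad"
proof -
  have "cnt P f \<le> card ({j\<in>H. f j} \<union> bad A)"
    unfolding cnt_def procs_def using bad_sub
    by (intro card_mono) (auto simp: honest_iff finite_subset)
  also have "\<dots> \<le> card {j\<in>H. f j} + nbad" by (rule card_Un_le)
  finally show ?thesis .
qed

lemma card_honest_le_cnt: "card {j\<in>H. f j} \<le> cnt P f"
  unfolding cnt_def procs_def by (intro card_mono) (auto simp: honest_iff)

lemma sym_agree_card_le:
  assumes "length c = lP P" "length d = lP P" "c \<noteq> d"
    and "S \<subseteq> {1..n}" "\<And>j. j \<in> S \<Longrightarrow> sym P c j = sym P d j"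
  shows "card S \<le> m"
proof (rule ccontr)
  assume "\<not> card S \<le> m"
  then have "kk P \<le> card S" by (simp add: kk_def)
  moreover have "kk P \<le> n" using n_bound by (simp add: kk_def)
  ultimately show False using sym_agree_imp_eq[OF alpha_inj _ beta_inj] assms by blast
qed

definition link :: "nat \<Rightarrow> nat \<Rightarrow> bool" where
  "link i j \<longleftrightarrow> sym P (w j) i = sym P (w i) i \<and> sym P (w j) j = sym P (w i) j"

lemma s2_imp_s1: "s2 P w A i \<Longrightarrow> s1 P w A i"
  unfolding s2_def by simp

lemma s3_imp_s2: "s3 P w A i \<Longrightarrow> s2 P w A i"
  unfolding s3_def by simp

lemma recv1_honest: "j \<in> H \<Longrightarrow> recv1 P w A i j = (sym P (w j) i, sym P (w j) j)"
  unfolding recv1_def y_def by (simp add: honest_iff)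

lemma u1_honest: "i \<in> H \<Longrightarrow> j \<in> H \<Longrightarrow> u1 P w A i j = link i j"
  unfolding u1_def link_def y_def by (auto simp: recv1_honest)

lemma rs1_honest: "i \<in> H \<Longrightarrow> j \<in> H \<Longrightarrow> rs1 P w A i j = s1 P w A j"
  unfolding rs1_def by (simp add: honest_iff)

lemma rs2_honest: "i \<in> H \<Longrightarrow> j \<in> H \<Longrightarrow> rs2 P w A i j = s2 P w A j"
  unfolding rs2_def msg2_def using rs1_honest s2_imp_s1 by (auto simp: honest_iff)

lemma rs3_honest: "i \<in> H \<Longrightarrow> j \<in> H \<Longrightarrow> rs3 P w A i j = s3 P w A j"
  unfolding rs3_def msg3_def using rs2_honest s3_imp_s2 by (auto simp: honest_iff)

lemma u2_honest:
  "i \<in> H \<Longrightarrow> j \<in> H \<Longrightarrow> s1 P w A i \<Longrightarrow> u2 P w A i j \<longleftrightarrow> link i j \<and> s1 P w A j"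
  unfolding u2_def by (simp add: u1_honest rs1_honest)

lemma u3_honest:
  "i \<in> H \<Longrightarrow> j \<in> H \<Longrightarrow> s2 P w A i \<Longrightarrow> u3 P w A i j \<longleftrightarrow> u2 P w A i j \<and> s2 P w A j"
  unfolding u3_def by (simp add: rs2_honest)

lemma s1_card_links:
  assumes "i \<in> H" "s1 P w A i"
  shows "n - t \<le> card {j\<in>H. link i j} + nbad"
proof -
  have "{j\<in>H. u1 P w A i j} = {j\<in>H. link i j}" using assms(1) by (auto simp: u1_honest)
  then show ?thesis using assms(2) cnt_le_honest_plus_bad[of "u1 P w A i"] by (simp add: s1_def)
qed

lemma s2_card_links:
  assumes "i \<in> H" "s2 P w A i"
  shows "n - t \<le> card {j\<in>H. link i j \<and> s1 P w A j} + nbad"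
proof -
  have "{j\<in>H. u2 P w A i j} = {j\<in>H. link i j \<and> s1 P w A j}"
    using assms by (auto simp: u2_honest s2_imp_s1)
  then show ?thesis using assms(2) cnt_le_honest_plus_bad[of "u2 P w A i"] by (simp add: s2_def)
qed

definition agree_set :: "bool list \<Rightarrow> nat set" where
  "agree_set c = {x\<in>H. sym P c x = sym P (w x) x}"

lemma finite_agree_set: "finite (agree_set c)"
  unfolding agree_set_def using finite_honest by simp

lemma card_agree_set_Int:
  assumes "length c = lP P" "length d = lP P" "c \<noteq> d"
  shows "card (agree_set c \<inter> agree_set d) \<le> m"
  using assms by (rule sym_agree_card_le) (auto simp: agree_set_def honest_iff)

lemma s1_card_agree_set:
  assumes "i \<in> H" "s1 P w A i"
  shows "n - t \<le> card (agree_set (w i)) + nbad"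
proof -
  have "{j\<in>H. link i j} \<subseteq> agree_set (w i)" by (auto simp: agree_set_def link_def)
  then have "card {j\<in>H. link i j} \<le> card (agree_set (w i))"
    by (rule card_mono[OF finite_agree_set])
  then show ?thesis using s1_card_links[OF assms] by linarith
qed

lemma s1_at_most_two_messages:
  assumes i: "i1 \<in> H" "i2 \<in> H" "i3 \<in> H"
    and s: "s1 P w A i1" "s1 P w A i2" "s1 P w A i3"
    and d: "w i1 \<noteq> w i2" "w i1 \<noteq> w i3" "w i2 \<noteq> w i3"
  shows False
proof -
  let ?D1 = "agree_set (w i1)" and ?D2 = "agree_set (w i2)" and ?D3 = "agree_set (w i3)"
  have "card ?D1 + card ?D2 + card ?D3
      \<le> card (?D1 \<union> ?D2 \<union> ?D3) + card (?D1 \<inter> ?D2) + card (?D1 \<inter> ?D3) + card (?D2 \<inter> ?D3)"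
    by (intro card3_le_card_Un_Int finite_agree_set)
  moreover have "card (?D1 \<union> ?D2 \<union> ?D3) \<le> card H"
    using finite_honest by (intro card_mono) (auto simp: agree_set_def)
  moreover have "card (?D1 \<inter> ?D2) \<le> m" "card (?D1 \<inter> ?D3) \<le> m" "card (?D2 \<inter> ?D3) \<le> m"
    using card_agree_set_Int inputs i d by auto
  moreover have "n - t \<le> card ?D1 + nbad" "n - t \<le> card ?D2 + nbad" "n - t \<le> card ?D3 + nbad"
    using s1_card_agree_set i s by auto
  moreover have "5 * m \<le> t" by simp
  ultimately show False using card_honest n_bound bad_card by linarith
qed

definition core_set :: "bool list \<Rightarrow> bool list \<Rightarrow> nat set" where
  "core_set a b = {x\<in>H. s1 P w A x \<and> w x = a \<and> sym P a x \<noteq> sym P b x}"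

lemma finite_core_set: "finite (core_set a b)"
  unfolding core_set_def using finite_honest by simp

lemma s2_card_core_set:
  assumes i: "i \<in> H" "s2 P w A i" and b: "length b = lP P" "w i \<noteq> b"
    and two: "\<And>j. j \<in> H \<Longrightarrow> s1 P w A j \<Longrightarrow> w j = w i \<or> w j = b"
  shows "n - t \<le> card (core_set (w i) b) + m + nbad"
proof -
  define Z where "Z = {x\<in>{1..n}. sym P (w i) x = sym P b x}"
  have "card Z \<le> m"
    unfolding Z_def by (rule sym_agree_card_le[OF inputs[OF i(1)] b]) auto
  have "{j\<in>H. link i j \<and> s1 P w A j} \<subseteq> core_set (w i) b \<union> Z"
  proof
    fix j assume j: "j \<in> {j\<in>H. link i j \<and> s1 P w A j}"
    then have "w j = w i \<or> w j = b" using two by blast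
    then show "j \<in> core_set (w i) b \<union> Z"
      using j by (auto simp: core_set_def Z_def link_def honest_iff)
  qed
  then have "card {j\<in>H. link i j \<and> s1 P w A j} \<le> card (core_set (w i) b \<union> Z)"
    using finite_core_set by (intro card_mono) (auto simp: Z_def)
  also have "\<dots> \<le> card (core_set (w i) b) + card Z" by (rule card_Un_le)
  finally show ?thesis using s2_card_links[OF i] \<open>card Z \<le> m\<close> by linarith
qed

text \<open>Each core processor has many links to honest holders of neither a nor b, while each
  such holder links to at most m core processors.\<close>
lemma core_set_double_count:
  assumes a: "length a = lP P"
  shows "card (core_set a b) * (n - t - nbad - card {x\<in>H. w x = a})
           \<le> card {x\<in>H. w x \<notin> {a, b}} * m"
proof -
  define Others where "Others = {x\<in>H. w x \<notin> {a, b}}"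
  have "n - t - nbad - card {x\<in>H. w x = a} \<le> card {j\<in>Others. link y j}"
    if y: "y \<in> core_set a b" for y
  proof -
    have "{j\<in>H. link y j} \<subseteq> {x\<in>H. w x = a} \<union> {j\<in>Others. link y j}"
      using y by (auto simp: core_set_def Others_def link_def)
    then have "card {j\<in>H. link y j} \<le> card ({x\<in>H. w x = a} \<union> {j\<in>Others. link y j})"
      using finite_honest by (intro card_mono) (auto simp: Others_def)
    also have "\<dots> \<le> card {x\<in>H. w x = a} + card {j\<in>Others. link y j}" by (rule card_Un_le)
    finally show ?thesis using s1_card_links[of y] y by (auto simp: core_set_def)
  qed
  then have "card (core_set a b) * (n - t - nbad - card {x\<in>H. w x = a})
               \<le> (\<Sum>y\<in>core_set a b. card {j\<in>Others. link y j})"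
    using sum_mono[of "core_set a b" "\<lambda>_. n - t - nbad - card {x\<in>H. w x = a}"] by simp
  also have "\<dots> = (\<Sum>x\<in>Others. card {y\<in>core_set a b. link y x})"
    using finite_core_set finite_honest by (intro sum_card_filter_swap) (auto simp: Others_def)
  also have "\<dots> \<le> card Others * m"
  proof -
    have "card {y\<in>core_set a b. link y x} \<le> m" if "x \<in> Others" for x
      using that inputs a by (intro sym_agree_card_le[of "w x" a])
        (auto simp: Others_def core_set_def link_def honest_iff)
    then show ?thesis using sum_bounded_above[of Others _ m] by simp
  qed
  finally show ?thesis unfolding Others_def .
qed

lemma s2_honest_same_message:
  assumes i: "i \<in> H" "j \<in> H" and s: "s2 P w A i" "s2 P w A j"
  shows "w i = w j"
proof (rule ccontr)
  assume ne: "w i \<noteq> w j"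
  have two: "w k = w i \<or> w k = w j" if "k \<in> H" "s1 P w A k" for k
    using s1_at_most_two_messages[OF i that(1) s2_imp_s1[OF s(1)] s2_imp_s1[OF s(2)] that(2) ne]
    by metis
  have len: "length (w i) = lP P" "length (w j) = lP P" using inputs i by auto
  have ca: "n - t \<le> card (core_set (w i) (w j)) + m + nbad"
    by (rule s2_card_core_set[OF i(1) s(1) len(2) ne]) (use two in blast)
  have cb: "n - t \<le> card (core_set (w j) (w i)) + m + nbad"
    by (rule s2_card_core_set[OF i(2) s(2) len(1) ne[symmetric]]) (use two in blast)
  have db: "card (core_set (w j) (w i)) * (n - t - nbad - card {x\<in>H. w x = w j})
              \<le> card {x\<in>H. w x \<notin> {w i, w j}} * m"
    using core_set_double_count[OF len(2), of "w i"] by (simp add: insert_commute)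
  have part: "card {x\<in>H. w x = w i} + card {x\<in>H. w x = w j} + card {x\<in>H. w x \<notin> {w i, w j}}
               + nbad = n"
    using card_filter_two_values[OF finite_honest ne, of w] card_honest by simp
  show False
    by (rule double_count_bounds_contradiction[OF ca cb core_set_double_count[OF len(1)] db part
          n_bound bad_card]) simp
qed

lemma vote_card_s3:
  assumes "i \<in> H" "vote P w A i"
  shows "2 * t + 1 \<le> card {j\<in>H. s3 P w A j} + nbad"
proof -
  have "{j\<in>H. rs3 P w A i j} = {j\<in>H. s3 P w A j}" using assms(1) by (auto simp: rs3_honest)
  then show ?thesis using assms(2) cnt_le_honest_plus_bad[of "rs3 P w A i"] by (simp add: vote_def)
qed

text \<open>The honest processors that succeed in Phase 3 outnumber the dishonest ones and all
  send the same first component, so it is the unique most frequent value.\<close>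
lemma newy_eq_sym_s3:
  assumes i: "i \<in> H" and i0: "i0 \<in> H" "s3 P w A i0"
    and many: "nbad < card {j\<in>H. s3 P w A j}"
  shows "newy P w A i = sym P (w i0) i"
proof -
  define v where "v = sym P (w i0) i"
  let ?f = "\<lambda>j. fst (recv1 P w A i j)"
  have honest_v: "?f j = v" if "j \<in> H" "s3 P w A j" for j
    using s2_honest_same_message[OF that(1) i0(1) s3_imp_s2[OF that(2)] s3_imp_s2[OF i0(2)]] that(1)
    by (simp add: recv1_honest v_def)
  have S1v_honest: "j \<in> S1v P w A i \<longleftrightarrow> s3 P w A j" if "j \<in> H" for j
    using that i by (auto simp: S1v_def rs3_honest procs_def honest_iff)
  have "{j\<in>H. s3 P w A j} \<subseteq> {j\<in>S1v P w A i. ?f j = v}"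
    using honest_v S1v_honest by auto
  then have freq_v: "card {j\<in>H. s3 P w A j} \<le> freq P w A i v"
    unfolding freq_def by (rule card_mono[rotated]) (simp add: S1v_def procs_def)
  have freq_other: "freq P w A i u \<le> nbad" if "u \<noteq> v" for u
  proof -
    have "{j\<in>S1v P w A i. ?f j = u} \<subseteq> bad A"
      using that honest_v S1v_honest by (auto simp: S1v_def procs_def honest_iff)
    then show ?thesis unfolding freq_def by (rule card_mono[OF finite_bad])
  qed
  have "v \<in> ?f ` S1v P w A i" using honest_v[OF i0] S1v_honest[OF i0(1)] i0(2) by force
  then have "{x \<in> ?f ` S1v P w A i. \<forall>u. freq P w A i u \<le> freq P w A i x} = {v}"
    using freq_v freq_other many by (intro argmax_set_eq_singleton) fastforce+
  then show ?thesis using tieb_ok[of "{v}"] by (simp add: newy_def v_def)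
qed

lemma z_eq_sym_s3:
  assumes i: "i \<in> H" "\<not> s3 P w A i" and j: "j \<in> H" and i0: "i0 \<in> H" "s3 P w A i0"
    and many: "nbad < card {j\<in>H. s3 P w A j}"
  shows "z P w A i j = sym P (w i0) j"
proof (cases "j = i")
  case True
  then show ?thesis using newy_eq_sym_s3[OF i(1) i0 many] by (simp add: z_def)
next
  case ne: False
  show ?thesis
  proof (cases "s3 P w A j")
    case True
    then have "w j = w i0" using s2_honest_same_message[OF j i0(1)] s3_imp_s2 i0(2) by blast
    then show ?thesis using ne True i j by (simp add: z_def rs3_honest recv1_honest)
  next
    case False
    then show ?thesis
      using ne i j newy_eq_sym_s3[OF j i0 many]
      by (simp add: z_def recv4_def rs3_honest honest_iff)
  qed
qed

lemma decodable_unique: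
  assumes "decodable P w A i x" "decodable P w A i x'"
  shows "x = x'"
proof -
  define S S' where "S = {j\<in>procs P. sym P x j = z P w A i j}"
    and "S' = {j\<in>procs P. sym P x' j = z P w A i j}"
  have fin: "finite S" "finite S'" by (simp_all add: S_def S'_def procs_def)
  have "n - t \<le> card S" "n - t \<le> card S'"
    using assms by (simp_all add: decodable_def cnt_def S_def S'_def)
  moreover have "card (S \<union> S') \<le> card (procs P)"
    by (intro card_mono) (auto simp: S_def S'_def procs_def)
  moreover have "card (S \<union> S') + card (S \<inter> S') = card S + card S'"
    using card_Un_Int[OF fin] by simp
  moreover have "t div 5 \<le> t" by simp
  ultimately have "kk P \<le> card (S \<inter> S')" using n_bound by (simp add: kk_def procs_def)
  moreover have "kk P \<le> n" using n_bound by (simp add: kk_def)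
  moreover have "length x = lP P" "length x' = lP P" using assms by (simp_all add: decodable_def)
  moreover have "S \<inter> S' \<subseteq> {1..n}" by (auto simp: S_def procs_def)
  moreover have "sym P x j = sym P x' j" if "j \<in> S \<inter> S'" for j
    using that by (simp add: S_def S'_def)
  ultimately show ?thesis using sym_agree_imp_eq[OF alpha_inj _ beta_inj] by blast
qed

lemma cool_output_eq_s3_message:
  assumes i: "i \<in> H" "ba_dec A i" and i0: "i0 \<in> H" "s3 P w A i0"
    and many: "nbad < card {j\<in>H. s3 P w A j}"
  shows "cool_output P w A i = Some (w i0)"
proof (cases "s3 P w A i")
  case True
  then show ?thesis
    using s2_honest_same_message[OF i(1) i0(1)] s3_imp_s2 i0(2) i(2) by (simp add: cool_output_def)
next
  case False
  have "{j\<in>H. sym P (w i0) j = z P w A i j} = H"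
    using z_eq_sym_s3[OF i(1) False _ i0 many] by auto
  then have "decodable P w A i (w i0)"
    using card_honest_le_cnt[of "\<lambda>j. sym P (w i0) j = z P w A i j"] card_honest bad_card
      inputs[OF i0(1)]
    by (simp add: decodable_def)
  then have "(SOME x. decodable P w A i x) = w i0"
    using decodable_unique by (blast intro: some_equality)
  then show ?thesis using False i(2) \<open>decodable P w A i (w i0)\<close> by (auto simp: cool_output_def)
qed

lemma unanimous_imp_s3:
  assumes all: "\<forall>j\<in>H. w j = c" and i: "i \<in> H"
  shows "s3 P w A i"
proof -
  have n_t: "n - t \<le> card H" using card_honest bad_card by linarith
  have link: "link k j" if "k \<in> H" "j \<in> H" for k j using all that by (simp add: link_def)
  have s1: "s1 P w A k" if "k \<in> H" for k
  proof -
    have "{j\<in>H. u1 P w A k j} = H" using that link by (auto simp: u1_honest)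
    then show ?thesis using card_honest_le_cnt[of "u1 P w A k"] n_t by (simp add: s1_def)
  qed
  have s2: "s2 P w A k" if "k \<in> H" for k
  proof -
    have "{j\<in>H. u2 P w A k j} = H" using that link s1 by (auto simp: u2_honest)
    then show ?thesis using card_honest_le_cnt[of "u2 P w A k"] n_t s1[OF that] by (simp add: s2_def)
  qed
  have "{j\<in>H. u3 P w A i j} = H" using i link s1 s2 by (auto simp: u3_honest u2_honest)
  then show ?thesis using card_honest_le_cnt[of "u3 P w A i"] n_t s2[OF i] by (simp add: s3_def)
qed

lemma cool_consistent:
  assumes ba: "ba_ok P w A" and i: "i \<in> H" and j: "j \<in> H"
  shows "cool_output P w A i = cool_output P w A j"
proof -
  have dec: "ba_dec A j = ba_dec A i" using ba i j unfolding ba_ok_def by blast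
  show ?thesis
  proof (cases "ba_dec A i")
    case False
    then show ?thesis using dec by (simp add: cool_output_def)
  next
    case True
    obtain v where "v \<in> H" "vote P w A v"
    proof (rule ccontr)
      assume "\<not> thesis"
      then have "\<forall>v\<in>H. vote P w A v = False" using that by blast
      then have "ba_dec A i = False" using ba i unfolding ba_ok_def by blast
      then show False using True by simp
    qed
    then have "2 * t + 1 \<le> card {k\<in>H. s3 P w A k} + nbad" by (rule vote_card_s3)
    then have many: "nbad < card {k\<in>H. s3 P w A k}" using bad_card by linarith
    then have "{k\<in>H. s3 P w A k} \<noteq> {}" by (metis card.empty not_less0)
    then obtain i0 where "i0 \<in> H" "s3 P w A i0" by auto
    then show ?thesis
      using cool_output_eq_s3_message[OF i True] cool_output_eq_s3_message[OF j] dec True many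
      by simp
  qed
qed

lemma cool_valid:
  assumes ba: "ba_ok P w A" and all: "\<forall>j\<in>H. w j = c" and i: "i \<in> H"
  shows "cool_output P w A i = Some c"
proof -
  have "vote P w A j = True" if "j \<in> H" for j
  proof -
    have "{k\<in>H. rs3 P w A j k} = H" using that unanimous_imp_s3[OF all] by (auto simp: rs3_honest)
    then show ?thesis
      using card_honest_le_cnt[of "rs3 P w A j"] card_honest bad_card n_bound by (simp add: vote_def)
  qed
  then have "ba_dec A i" using ba i unfolding ba_ok_def by blast
  then show ?thesis using unanimous_imp_s3[OF all i] all i by (simp add: cool_output_def)
qed

end

theorem lemma2:
  fixes P :: "'f::{field,finite} cool_params"
    and A :: "'f cool_adv"
    and w :: "nat \<Rightarrow> bool list"
  assumes n_bound: "nP P \<ge> 3 * tP P + 1"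
    and field_size: "CARD('f) = 2 ^ cc P"
    and alpha_inj: "inj_on (alpha P) {1..nP P}"
    and alpha_nz: "\<forall>i\<in>{1..nP P}. alpha P i \<noteq> 0"
    and beta_bij: "bij_betw (beta P) {xs. length xs = cc P} UNIV"
    and tieb_ok: "\<forall>S. S \<noteq> {} \<longrightarrow> tieb P S \<in> S"
    and bad_sub: "bad A \<subseteq> {1..nP P}"
    and bad_card: "card (bad A) \<le> tP P"
    and inputs: "\<forall>i\<in>honest P A. length (w i) = lP P"
    and ba: "ba_ok P w A"
  shows "(\<forall>i\<in>honest P A. \<forall>j\<in>honest P A. cool_output P w A i = cool_output P w A j)
       \<and> (\<forall>m. (\<forall>i\<in>honest P A. w i = m) \<longrightarrow> (\<forall>i\<in>honest P A. cool_output P w A i = Some m))"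
proof -
  interpret cool_run P A w
    using assms bij_betw_imp_inj_on[OF beta_bij] by unfold_locales auto
  show ?thesis using cool_consistent[OF ba] cool_valid[OF ba] by blast
qed

end
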